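(* Let $\varphi,\psi\in G$ satisfy $\lim_{t\to0+}\psi(t)/\varphi(t)=0$, $\delta_\varphi<1$, and $M(\tilde\varphi)\subset\Lambda(\psi)$. Then there exists a function $\rho\in G$ such that (1) $\lim_{t\to 0+}\rho(t)/\varphi(t)=0$, and (2) $M(\tilde\rho)\subset\Lambda(\psi)$.
   Context: All functions are Lebesgue measurable on $[0,1]$, and $x^*$ denotes the decreasing left-continuous rearrangement of $|x|$. $G$ denotes the class of all positive increasing concave functions on $(0,1]$. For $\psi\in G$, the Lorentz space $\Lambda(\psi)$ consists of all measurable $x$ with $\|x\|_{\Lambda(\psi)}=\int_0^1 x^*(s)\,d\psi(s)<\infty$. For $\varphi\in G$ put $\tilde\varphi(t)=t/\varphi(t)$; the Marcinkiewicz space $M(\tilde\varphi)$ consists of all measurable $x$ with $\|x\|_{M(\tilde\varphi)}=\sup_{0<t\le1}\frac{1}{\tilde\varphi(t)}\int_0^t x^*(s)\,ds<\infty$ (similarly $M(\tilde\rho)$). For a positive function $f$ on $(0,1]$, its dilation function is $\mathcal M_f(t)=\sup\{f(st)/f(s):0<s\le\min(1,1/t)\}$ for $t>0$, and its upper dilation index is $\delta_f=\lim_{t\to\infty}\ln\mathcal M_f(t)/\ln t$. *)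

theory Defs
  imports "HOL-Analysis.Analysis"
begin

definition meas01 :: "(real \<Rightarrow> real) \<Rightarrow> bool" where
  "meas01 x \<longleftrightarrow> x \<in> borel_measurable (lebesgue_on {0..1})"

definition distrib_fun :: "(real \<Rightarrow> real) \<Rightarrow> real \<Rightarrow> real" where
  "distrib_fun x l = measure lebesgue {s \<in> {0..1}. \<bar>x s\<bar> > l}"

text \<open>Decreasing left-continuous rearrangement of |x|, for 0 < t \<le> 1.\<close>
definition rearr :: "(real \<Rightarrow> real) \<Rightarrow> real \<Rightarrow> real" where
  "rearr x t = Inf {l. l \<ge> 0 \<and> distrib_fun x l < t}"

definition classG :: "(real \<Rightarrow> real) \<Rightarrow> bool" where
  "classG f \<longleftrightarrow> (\<forall>t\<in>{0<..1}. f t > 0) \<and> mono_on {0<..1} f \<and> concave_on {0<..1} f"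

text \<open>Extension of \<psi> to the real line used to build the Lebesgue--Stieltjes measure d\<psi>
  on (0,1] (continuous, constant outside (0,1]).\<close>
definition ext_fun :: "(real \<Rightarrow> real) \<Rightarrow> real \<Rightarrow> real" where
  "ext_fun \<psi> t = (if t \<le> 0 then (INF s\<in>{0<..1}. \<psi> s) else if t \<le> 1 then \<psi> t else \<psi> 1)"

definition lorentz_norm :: "(real \<Rightarrow> real) \<Rightarrow> (real \<Rightarrow> real) \<Rightarrow> ennreal" where
  "lorentz_norm \<psi> x = (\<integral>\<^sup>+ s. ennreal (rearr x s) * indicator {0<..1} s \<partial>interval_measure (ext_fun \<psi>))"

definition lorentz_space :: "(real \<Rightarrow> real) \<Rightarrow> (real \<Rightarrow> real) set" where
  "lorentz_space \<psi> = {x. meas01 x \<and> lorentz_norm \<psi> x < \<infinity>}"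

definition tilde :: "(real \<Rightarrow> real) \<Rightarrow> real \<Rightarrow> real" where
  "tilde \<phi> t = t / \<phi> t"

definition marcinkiewicz_space :: "(real \<Rightarrow> real) \<Rightarrow> (real \<Rightarrow> real) set" where
  "marcinkiewicz_space w = {x. meas01 x \<and> (\<exists>C::real. \<forall>t\<in>{0<..1}.
      (\<integral>\<^sup>+ s. ennreal (rearr x s) * indicator {0<..t} s \<partial>lborel) \<le> ennreal (C * w t))}"

definition dilation_fun :: "(real \<Rightarrow> real) \<Rightarrow> real \<Rightarrow> real" where
  "dilation_fun f t = (SUP s\<in>{s. 0 < s \<and> s \<le> min 1 (1/t)}. f (s * t) / f s)"

definition upper_dilation_index :: "(real \<Rightarrow> real) \<Rightarrow> real" where
  "upper_dilation_index f = Lim at_top (\<lambda>t. ln (dilation_fun f t) / ln t)"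

end

theory Submission
  imports Defs
begin

text \<open>
  Since the upper dilation index of \<open>\<phi>\<close> is below 1, some \<open>T > 1\<close> has \<open>dilation_fun \<phi> T < T\<close>,
  which gives \<open>\<phi> b \<le> K (b/a)^\<gamma> \<phi> a\<close> for \<open>a \<le> b\<close> with \<open>\<gamma> < 1\<close>. This makes \<open>1/\<phi>\<close> an element
  of \<open>M(\<tilde>\<phi>)\<close>, hence of \<open>\<Lambda>(\<psi>)\<close>: the function \<open>1/\<phi>\<close> is \<open>d\<psi>\<close>-integrable on \<open>(0,1]\<close>.
  Choose \<open>\<tau> k\<close> such that the \<open>d\<psi>\<close>-integral of \<open>1/\<phi>\<close> over \<open>(0,\<tau> k]\<close> is at most \<open>4^-k\<close> and let
  \<open>\<rho> t = inf\<^sub>j (2^-j \<phi> t + t \<phi>(\<tau> j)/\<tau> j)\<close>. As an infimum of functions of class G bounded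
  below by \<open>t \<phi> 1\<close>, \<open>\<rho>\<close> is of class G; \<open>\<rho>/\<phi> \<rightarrow> 0\<close> because \<open>t/\<phi> t \<rightarrow> 0\<close>, which follows
  from \<open>\<psi>/\<phi> \<rightarrow> 0\<close> and \<open>\<psi> t \<ge> t \<psi> 1\<close>. Moreover \<open>\<phi> t/\<rho> t\<close> is at most 1 plus the sum of
  \<open>2^k\<close> over all \<open>k\<close> with \<open>t \<le> \<tau> k\<close>, a weight whose integral against \<open>d\<psi>/\<phi>\<close> is finite since
  \<open>\<Sum>\<^sub>k 2^k 4^-k < \<infinity>\<close>. So \<open>1/\<rho>\<close> is still \<open>d\<psi>\<close>-integrable; as every \<open>x \<in> M(\<tilde>\<rho>)\<close> has
  \<open>x\<^sup>* \<le> C/\<rho>\<close>, every such \<open>x\<close> lies in \<open>\<Lambda>(\<psi>)\<close>.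
\<close>

section \<open>The class G\<close>

lemma classG_pos: "classG f \<Longrightarrow> 0 < t \<Longrightarrow> t \<le> 1 \<Longrightarrow> 0 < f t"
  by (auto simp: classG_def)

lemma classG_mono: "classG f \<Longrightarrow> 0 < s \<Longrightarrow> s \<le> t \<Longrightarrow> t \<le> 1 \<Longrightarrow> f s \<le> f t"
  by (auto simp: classG_def mono_on_def)

lemma classG_concave:
  assumes "classG f" "x \<in> {0<..1}" "y \<in> {0<..1}" "0 \<le> u" "u \<le> 1"
  shows "(1 - u) * f x + u * f y \<le> f ((1 - u) * x + u * y)"
  using concave_onD[of "{0<..1}" f u x y] assms by (auto simp: classG_def)

lemma classG_ratio_antimono:
  assumes G: "classG f" and ab: "0 < a" "a \<le> b" "b \<le> 1"
  shows "a * f b \<le> b * f a"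
proof -
  txt \<open>Concavity on the chord from a small \<open>e > 0\<close> to \<open>b\<close>, then \<open>e \<rightarrow> 0\<close>.\<close>
  have chord: "(a - e) / (b - e) * f b \<le> f a" if e: "0 < e" "e < a" for e
  proof -
    define u where "u = (a - e) / (b - e)"
    have u: "0 \<le> u" "u \<le> 1" using e ab by (auto simp: u_def)
    have "u * (b - e) = a - e" using e ab by (simp add: u_def)
    then have comb: "(1 - u) * e + u * b = a" by (simp add: algebra_simps)
    have "(1 - u) * f e + u * f b \<le> f a"
      using classG_concave[OF G, of e b u] u comb e ab by auto
    moreover have "0 \<le> (1 - u) * f e"
      using classG_pos[OF G, of e] u e ab by simp
    ultimately show ?thesis unfolding u_def by linarith
  qed
  have "((\<lambda>e. (a - e) / (b - e) * f b) \<longlongrightarrow> (a - 0) / (b - 0) * f b) (at_right 0)"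
    using ab by (intro tendsto_intros) auto
  moreover have "eventually (\<lambda>e. (a - e) / (b - e) * f b \<le> f a) (at_right 0)"
    using chord ab(1) by (auto simp: eventually_at_right_field)
  ultimately have "a / b * f b \<le> f a"
    by (intro tendsto_upperbound) auto
  then show ?thesis using ab by (simp add: field_simps)
qed

lemma classG_linear_le: "classG f \<Longrightarrow> 0 < t \<Longrightarrow> t \<le> 1 \<Longrightarrow> t * f 1 \<le> f t"
  using classG_ratio_antimono[of f t 1] by simp

lemma classG_linear: "0 < c \<Longrightarrow> classG (\<lambda>t. c * t)"
  unfolding classG_def
  by (auto intro!: mono_onI concave_on_cmul simp: concave_on_ident convex_real_interval)

lemma classG_cmult: "0 < c \<Longrightarrow> classG f \<Longrightarrow> classG (\<lambda>t. c * f t)"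
  unfolding classG_def by (auto intro!: mono_onI concave_on_cmul dest: mono_onD)

lemma classG_add: "classG f \<Longrightarrow> classG g \<Longrightarrow> classG (\<lambda>t. f t + g t)"
  unfolding classG_def by (auto intro!: mono_onI concave_on_add add_pos_pos add_mono dest: mono_onD)

lemma concave_on_cINF:
  fixes f :: "'i \<Rightarrow> 'a::real_vector \<Rightarrow> real"
  assumes I: "I \<noteq> {}" and conc: "\<And>i. i \<in> I \<Longrightarrow> concave_on S (f i)"
    and bdd: "\<And>x. x \<in> S \<Longrightarrow> bdd_below ((\<lambda>i. f i x) ` I)"
  shows "concave_on S (\<lambda>x. INF i\<in>I. f i x)"
  unfolding concave_on_iff
proof (intro conjI ballI allI impI)
  show "convex S" using I conc concave_on_imp_convex by blast
  fix x y and u v :: real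
  assume xy: "x \<in> S" "y \<in> S" and uv: "0 \<le> u" "0 \<le> v" "u + v = 1"
  show "u * (INF i\<in>I. f i x) + v * (INF i\<in>I. f i y) \<le> (INF i\<in>I. f i (u *\<^sub>R x + v *\<^sub>R y))"
  proof (rule cINF_greatest[OF I])
    fix i assume i: "i \<in> I"
    have "u * (INF i\<in>I. f i x) \<le> u * f i x" "v * (INF i\<in>I. f i y) \<le> v * f i y"
      using uv i cINF_lower[OF bdd] xy by (auto intro: mult_left_mono)
    moreover have "u * f i x + v * f i y \<le> f i (u *\<^sub>R x + v *\<^sub>R y)"
      using conc[OF i] xy uv unfolding concave_on_iff by blast
    ultimately show "u * (INF i\<in>I. f i x) + v * (INF i\<in>I. f i y) \<le> f i (u *\<^sub>R x + v *\<^sub>R y)"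
      by linarith
  qed
qed

lemma classG_cINF:
  assumes f: "\<And>i. classG (f i)" and g: "classG g"
    and lower: "\<And>i t. 0 < t \<Longrightarrow> t \<le> 1 \<Longrightarrow> g t \<le> f i t"
  shows "classG (\<lambda>t. INF i. f i t)"
proof -
  have bdd: "bdd_below (range (\<lambda>i. f i t))" if "t \<in> {0<..1}" for t
    using lower that by (intro bdd_belowI[where m = "g t"]) auto
  have "g t \<le> (INF i. f i t)" if "0 < t" "t \<le> 1" for t
    using lower that by (intro cINF_greatest) auto
  then have "0 < (INF i. f i t)" if "t \<in> {0<..1}" for t
    using classG_pos[OF g] that by (auto intro: less_le_trans)
  moreover have "mono_on {0<..1} (\<lambda>t. INF i. f i t)"
  proof (rule mono_onI)
    fix s t :: real assume "s \<in> {0<..1}" "t \<in> {0<..1}" "s \<le> t"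
    then have "(INF i. f i s) \<le> f i t" for i
      using cINF_lower[OF bdd, of s i] classG_mono[OF f, of s t i] by auto
    then show "(INF i. f i s) \<le> (INF i. f i t)" by (intro cINF_greatest) auto
  qed
  moreover have "concave_on {0<..1} (\<lambda>t. INF i. f i t)"
    using f bdd by (intro concave_on_cINF) (auto simp: classG_def)
  ultimately show ?thesis unfolding classG_def by blast
qed

lemma eventually_at_right_0_unit: "eventually (\<lambda>t. 0 < t \<and> t \<le> 1) (at_right (0::real))"
  by (auto simp: eventually_at_right_field intro: exI[of _ 1])

lemma tendsto_id_div_classG:
  assumes G: "classG \<phi>" "classG \<psi>" and lim: "((\<lambda>t. \<psi> t / \<phi> t) \<longlongrightarrow> 0) (at_right 0)"
  shows "((\<lambda>t. t / \<phi> t) \<longlongrightarrow> 0) (at_right 0)"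
proof (rule tendsto_sandwich)
  show "eventually (\<lambda>t. 0 \<le> t / \<phi> t) (at_right 0)"
    using eventually_at_right_0_unit
    by eventually_elim (use classG_pos[OF G(1)] in \<open>auto intro!: divide_nonneg_pos\<close>)
  show "eventually (\<lambda>t. t / \<phi> t \<le> (\<psi> t / \<phi> t) / \<psi> 1) (at_right 0)"
    using eventually_at_right_0_unit
  proof eventually_elim
    case (elim t)
    then have "t * \<psi> 1 \<le> \<psi> t" "0 < \<phi> t" "0 < \<psi> 1"
      using classG_linear_le[OF G(2)] classG_pos[OF G(1)] classG_pos[OF G(2), of 1] by auto
    then show ?case by (simp add: field_simps)
  qed
  show "((\<lambda>t. (\<psi> t / \<phi> t) / \<psi> 1) \<longlongrightarrow> 0) (at_right 0)"
    using tendsto_divide[OF lim tendsto_const[of "\<psi> 1"]] classG_pos[OF G(2), of 1] by simp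
qed simp

section \<open>Dilation function\<close>

lemma dilation_fun_domain:
  fixes T :: real
  assumes "1 < T"
  shows "{s. 0 < s \<and> s \<le> min 1 (1/T)} = {0<..1/T}"
proof -
  have "1/T \<le> 1" using assms by (simp add: divide_le_eq_1)
  then show ?thesis by auto
qed

lemma classG_dilation_quotient_le:
  assumes G: "classG \<phi>" and T: "1 < T" and s: "0 < s" "s \<le> 1/T"
  shows "\<phi> (s * T) / \<phi> s \<le> T"
proof -
  have "1/T < 1" using T by simp
  then have "s \<le> 1" using s by linarith
  have "s * T \<le> 1" "s \<le> s * T" using s T by (simp_all add: field_simps)
  then have "s * \<phi> (s * T) \<le> s * T * \<phi> s"
    by (intro classG_ratio_antimono[OF G]) (use s in auto)
  moreover have "0 < \<phi> s" using classG_pos[OF G s(1) \<open>s \<le> 1\<close>] .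
  ultimately show ?thesis using s by (simp add: field_simps)
qed

lemma classG_dilation_fun_le:
  assumes G: "classG \<phi>" and T: "1 < T"
  shows "dilation_fun \<phi> T \<le> T"
  unfolding dilation_fun_def dilation_fun_domain[OF T]
  by (rule cSUP_least) (use T classG_dilation_quotient_le[OF G T] in auto)

lemma classG_le_dilation_fun:
  assumes G: "classG \<phi>" and T: "1 < T" and s: "0 < s" "s \<le> 1/T"
  shows "\<phi> (s * T) \<le> dilation_fun \<phi> T * \<phi> s"
proof -
  have bdd: "bdd_above ((\<lambda>s. \<phi> (s * T) / \<phi> s) ` {0<..1/T})"
    using classG_dilation_quotient_le[OF G T] by (intro bdd_aboveI[where M = T]) auto
  have "\<phi> (s * T) / \<phi> s \<le> dilation_fun \<phi> T"
    unfolding dilation_fun_def dilation_fun_domain[OF T]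
    by (rule cSUP_upper[OF _ bdd]) (use s in auto)
  moreover have "1/T < 1" using T by simp
  with s have "0 < \<phi> s" using classG_pos[OF G, of s] by linarith
  ultimately show ?thesis by (simp add: field_simps)
qed

text \<open>Since always \<open>dilation_fun \<phi> T \<le> T\<close>, otherwise the upper dilation index would be \<open>1\<close>.\<close>
lemma dilation_fun_less_self:
  assumes G: "classG \<phi>" and I: "upper_dilation_index \<phi> < 1"
  obtains T where "1 < T" "dilation_fun \<phi> T < T"
proof -
  have "\<exists>T>1. dilation_fun \<phi> T < T"
  proof (rule ccontr)
    assume none: "\<not> (\<exists>T>1. dilation_fun \<phi> T < T)"
    have eq: "dilation_fun \<phi> T = T" if T: "1 < T" for T
    proof -
      have "\<not> dilation_fun \<phi> T < T" using none T by blast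
      with classG_dilation_fun_le[OF G T] show ?thesis by simp
    qed
    have "eventually (\<lambda>t. ln (dilation_fun \<phi> t) / ln t = 1) at_top"
      unfolding eventually_at_top_linorder by (rule exI[of _ 2]) (auto simp: eq)
    then have "((\<lambda>t. ln (dilation_fun \<phi> t) / ln t) \<longlongrightarrow> 1) at_top"
      by (rule tendsto_eventually)
    then have "upper_dilation_index \<phi> = 1"
      unfolding upper_dilation_index_def by (rule tendsto_Lim[rotated]) simp
    with I show False by simp
  qed
  with that show ?thesis by blast
qed

lemma classG_one_le_dilation_fun:
  assumes G: "classG \<phi>" and T: "1 < T"
  shows "1 \<le> dilation_fun \<phi> T"
proof -
  have "\<phi> 1 \<le> dilation_fun \<phi> T * \<phi> (1/T)" "\<phi> (1/T) \<le> \<phi> 1" "0 < \<phi> (1/T)"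
    using classG_le_dilation_fun[OF G T, of "1/T"] classG_mono[OF G, of "1/T" 1]
      classG_pos[OF G, of "1/T"] T by auto
  then have "\<phi> (1/T) \<le> dilation_fun \<phi> T * \<phi> (1/T)" by linarith
  with \<open>0 < \<phi> (1/T)\<close> show ?thesis by (simp add: mult_le_cancel_right1)
qed

lemma dilation_power_bound:
  assumes G: "classG \<phi>" and T: "1 < T" and \<beta>: "1 \<le> \<beta>"
    and dil: "\<And>u. 0 < u \<Longrightarrow> u \<le> 1/T \<Longrightarrow> \<phi> (u * T) \<le> \<beta> * \<phi> u"
    and ab: "0 < a" "a \<le> b" "b \<le> 1"
  shows "\<phi> b \<le> \<beta> * (b/a) powr (ln \<beta> / ln T) * \<phi> a"
proof -
  define \<gamma> where "\<gamma> = ln \<beta> / ln T"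
  have \<gamma>: "0 \<le> \<gamma>" "T powr \<gamma> = \<beta>"
    using T \<beta> unfolding \<gamma>_def powr_def by auto
  txt \<open>Induction on the number of factors \<open>T\<close> separating \<open>a\<close> from \<open>b\<close>; each costs \<open>\<beta> = T powr \<gamma>\<close>.\<close>
  have "\<phi> b \<le> \<beta> * (b/a) powr \<gamma> * \<phi> a" if "b/a < T^n" "0 < a" "a \<le> b" "b \<le> 1" for n a b
    using that
  proof (induction n arbitrary: a)
    case 0
    then show ?case by (simp add: field_simps)
  next
    case (Suc n)
    have \<phi>a: "0 < \<phi> a" using classG_pos[OF G] Suc.prems by auto
    show ?case
    proof (cases "b/a < T")
      case True
      have "\<phi> b \<le> \<beta> * \<phi> a"
      proof (cases "a \<le> 1/T")
        case True
        have "b \<le> a * T" "a * T \<le> 1" using \<open>b/a < T\<close> True Suc.prems T by (auto simp: field_simps)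
        then have "\<phi> b \<le> \<phi> (a * T)" using classG_mono[OF G, of b "a * T"] Suc.prems by auto
        then show ?thesis using dil[of a] True Suc.prems by auto
      next
        case False
        have "\<phi> b \<le> \<phi> 1" using classG_mono[OF G, of b 1] Suc.prems by auto
        also have "\<phi> 1 \<le> \<beta> * \<phi> (1/T)" using dil[of "1/T"] T by auto
        also have "\<phi> (1/T) \<le> \<phi> a" using classG_mono[OF G, of "1/T" a] False T Suc.prems by auto
        then have "\<beta> * \<phi> (1/T) \<le> \<beta> * \<phi> a" using \<beta> by simp
        finally show ?thesis .
      qed
      also have "\<beta> * \<phi> a \<le> \<beta> * (b/a) powr \<gamma> * \<phi> a"
        using Suc.prems \<gamma> \<beta> \<phi>a by (simp add: ge_one_powr_ge_zero)
      finally show ?thesis .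
    next
      case False
      define a' where "a' = a * T"
      have a': "0 < a'" "a' \<le> b"
        using False Suc.prems T by (auto simp: a'_def field_simps)
      have "b/a' = (b/a) / T" by (simp add: a'_def)
      also have "\<dots> < T^n"
        using Suc.prems T by (subst pos_divide_less_eq) (auto simp: power_Suc2 mult.commute)
      finally have "b/a' < T^n" .
      have "a \<le> 1/T" using a' Suc.prems T by (simp add: a'_def field_simps)
      then have "\<phi> a' \<le> \<beta> * \<phi> a" using dil[of a] Suc.prems by (simp add: a'_def)
      have "(b/a') powr \<gamma> = (b/a) powr \<gamma> / \<beta>"
        using Suc.prems T by (simp add: a'_def powr_divide \<gamma> flip: divide_divide_eq_left)
      have "\<phi> b \<le> \<beta> * (b/a') powr \<gamma> * \<phi> a'"
        using Suc.IH[OF \<open>b/a' < T^n\<close> a'] Suc.prems by auto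
      also have "\<dots> \<le> \<beta> * (b/a') powr \<gamma> * (\<beta> * \<phi> a)"
        using \<open>\<phi> a' \<le> \<beta> * \<phi> a\<close> \<beta> by (intro mult_left_mono) auto
      also have "\<dots> = \<beta> * (b/a) powr \<gamma> * \<phi> a"
        using \<open>(b/a') powr \<gamma> = (b/a) powr \<gamma> / \<beta>\<close> \<beta> by simp
      finally show ?thesis .
    qed
  qed
  moreover obtain n where "b/a < T^n" using real_arch_pow[OF T(1)] by blast
  ultimately show ?thesis using ab unfolding \<gamma>_def by blast
qed

lemma classG_power_bound:
  assumes G: "classG \<phi>" and I: "upper_dilation_index \<phi> < 1"
  obtains K \<gamma> where "0 \<le> K" "\<gamma> < 1"
    "\<And>a b. 0 < a \<Longrightarrow> a \<le> b \<Longrightarrow> b \<le> 1 \<Longrightarrow> \<phi> b \<le> K * (b/a) powr \<gamma> * \<phi> a"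
proof -
  obtain T where T: "1 < T" "dilation_fun \<phi> T < T"
    using dilation_fun_less_self[OF G I] .
  have \<beta>: "1 \<le> dilation_fun \<phi> T" by (rule classG_one_le_dilation_fun[OF G T(1)])
  have bound: "\<phi> b \<le> dilation_fun \<phi> T * (b/a) powr (ln (dilation_fun \<phi> T) / ln T) * \<phi> a"
    if "0 < a" "a \<le> b" "b \<le> 1" for a b
    using dilation_power_bound[OF G T(1) \<beta> _ that] classG_le_dilation_fun[OF G T(1)] by blast
  have exponent: "ln (dilation_fun \<phi> T) / ln T < 1"
    using \<beta> T by (simp add: divide_less_eq_1)
  show ?thesis
    by (rule that[OF _ exponent bound]) (use \<beta> in simp)
qed

section \<open>Decreasing rearrangement\<close>

lemma meas01_level_set:
  assumes "meas01 x"
  shows "{s \<in> {0..1}. l < \<bar>x s\<bar>} \<in> fmeasurable lebesgue"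
proof (rule fmeasurableI2)
  show "{0..1::real} \<in> fmeasurable lebesgue"
    using lmeasurable_cbox[of "0::real" 1] by (simp add: cbox_interval)
  have "{s \<in> space (lebesgue_on {0..1}). l < \<bar>x s\<bar>} \<in> sets (lebesgue_on {0..1})"
    using assms unfolding meas01_def by measurable
  then show "{s \<in> {0..1}. l < \<bar>x s\<bar>} \<in> sets lebesgue"
    by (simp add: sets_restrict_space_iff)
qed auto

lemma distrib_fun_less:
  assumes x: "meas01 x" and t: "0 < t"
  obtains l where "0 \<le> l" "distrib_fun x l < t"
proof -
  define A where "A n = {s \<in> {0..1}. real n < \<bar>x s\<bar>}" for n
  have fin: "A n \<in> fmeasurable lebesgue" for n
    unfolding A_def by (rule meas01_level_set[OF x])
  have A: "range A \<subseteq> sets lebesgue" "\<And>n. emeasure lebesgue (A n) \<noteq> \<infinity>"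
    using fmeasurableD[OF fin] fmeasurableD2[OF fin] by auto
  have dec: "decseq A" unfolding decseq_def A_def by auto
  have "(\<Inter>n. A n) = {}"
  proof -
    have "s \<notin> A (nat \<lceil>\<bar>x s\<bar>\<rceil>)" for s
      using le_of_int_ceiling[of "\<bar>x s\<bar>"] unfolding A_def by (simp add: not_less)
    then show ?thesis by blast
  qed
  then have lim: "(\<lambda>n. measure lebesgue (A n)) \<longlonglongrightarrow> 0"
    using Lim_measure_decseq[OF A(1) dec A(2)] by simp
  then obtain n where "measure lebesgue (A n) < t"
    using order_tendstoD(2)[OF lim t] by (auto simp: eventually_sequentially)
  then show ?thesis using that[of "real n"] by (simp add: A_def distrib_fun_def)
qed

lemma rearr_le:
  assumes "0 \<le> l" "distrib_fun x l < t"
  shows "rearr x t \<le> l"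
  unfolding rearr_def by (rule cInf_lower) (use assms in \<open>auto intro: bdd_belowI[of _ 0]\<close>)

lemma rearr_ge:
  assumes x: "meas01 x" and t: "0 < t" and v: "\<And>l. 0 \<le> l \<Longrightarrow> distrib_fun x l < t \<Longrightarrow> v \<le> l"
  shows "v \<le> rearr x t"
proof -
  obtain l where "0 \<le> l" "distrib_fun x l < t" using distrib_fun_less[OF x t] .
  then show ?thesis unfolding rearr_def by (intro cInf_greatest) (use v in auto)
qed

lemma rearr_nonneg: "meas01 x \<Longrightarrow> 0 < t \<Longrightarrow> 0 \<le> rearr x t"
  by (rule rearr_ge) auto

lemma rearr_antimono:
  assumes x: "meas01 x" and st: "0 < s" "s \<le> t"
  shows "rearr x t \<le> rearr x s"
proof -
  obtain l where "0 \<le> l" "distrib_fun x l < s" using distrib_fun_less[OF x st(1)] .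
  then show ?thesis unfolding rearr_def
    using st by (intro cInf_superset_mono) (auto intro: bdd_belowI[of _ 0])
qed

section \<open>Marcinkiewicz and Lorentz spaces\<close>

definition recip_on01 :: "(real \<Rightarrow> real) \<Rightarrow> real \<Rightarrow> real" where
  "recip_on01 f s = (if 0 < s \<and> s \<le> 1 then 1 / f s else 0)"

lemma recip_on01_borel:
  assumes G: "classG f"
  shows "recip_on01 f \<in> borel_measurable borel"
proof -
  have "mono_on {0<..1} (\<lambda>s. - (1 / f s))"
    using classG_mono[OF G] classG_pos[OF G] by (auto intro!: mono_onI frac_le)
  then have "(\<lambda>s. - (1 / f s)) \<in> borel_measurable (restrict_space borel {0<..1})"
    by (rule borel_measurable_mono_on_fnc)
  then have "(\<lambda>s. indicator {0<..1} s *\<^sub>R - (1 / f s)) \<in> borel_measurable borel"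
    by (subst (asm) borel_measurable_restrict_space_iff) auto
  then have "(\<lambda>s. - (indicator {0<..1} s *\<^sub>R - (1 / f s))) \<in> borel_measurable borel"
    by measurable
  moreover have "(\<lambda>s. - (indicator {0<..1} s *\<^sub>R - (1 / f s))) = recip_on01 f"
    by (auto simp: recip_on01_def fun_eq_iff indicator_def)
  ultimately show ?thesis by simp
qed

lemma meas01_recip_on01: "classG f \<Longrightarrow> meas01 (recip_on01 f)"
  unfolding meas01_def
  by (intro measurable_restrict_space1 measurable_completion) (simp add: recip_on01_borel)

text \<open>Going down to \<open>t/2\<close> avoids needing the (left) continuity of \<open>f\<close>.\<close>
lemma rearr_recip_on01_le:
  assumes G: "classG f" and t: "0 < t" "t \<le> 1"
  shows "rearr (recip_on01 f) t \<le> 1 / f (t/2)"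
proof (rule rearr_le)
  have pos: "0 < f (t/2)" using classG_pos[OF G, of "t/2"] t by auto
  then show "0 \<le> 1 / f (t/2)" by simp
  have "{s \<in> {0..1}. 1 / f (t/2) < \<bar>recip_on01 f s\<bar>} \<subseteq> {0..t/2}"
  proof
    fix s assume "s \<in> {s \<in> {0..1}. 1 / f (t/2) < \<bar>recip_on01 f s\<bar>}"
    then have s: "0 \<le> s" "s \<le> 1" "1 / f (t/2) < \<bar>recip_on01 f s\<bar>" by auto
    moreover have "0 < 1 / f (t/2)" using pos by simp
    ultimately have "0 < s" by (auto simp: recip_on01_def split: if_splits)
    have "0 < f s" using classG_pos[OF G, of s] \<open>0 < s\<close> s by simp
    have "1 / f (t/2) < 1 / f s" using s \<open>0 < s\<close> \<open>0 < f s\<close> by (simp add: recip_on01_def)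
    with pos \<open>0 < f s\<close> have "f s < f (t/2)" by (simp add: field_simps)
    then show "s \<in> {0..t/2}" using classG_mono[OF G, of "t/2" s] \<open>0 < s\<close> s t by force
  qed
  then have "distrib_fun (recip_on01 f) (1 / f (t/2)) \<le> measure lebesgue {0..t/2}"
    unfolding distrib_fun_def
    by (rule measure_mono_fmeasurable[OF _ fmeasurableD[OF meas01_level_set]])
      (auto intro: meas01_recip_on01 G)
  then show "distrib_fun (recip_on01 f) (1 / f (t/2)) < t" using t by simp
qed

lemma rearr_recip_on01_ge:
  assumes G: "classG f" and t: "0 < t" "t \<le> 1"
  shows "1 / f t \<le> rearr (recip_on01 f) t"
proof (rule rearr_ge[OF meas01_recip_on01[OF G] t(1)], rule ccontr)
  fix l assume l: "0 \<le> l" "distrib_fun (recip_on01 f) l < t" "\<not> 1 / f t \<le> l"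
  have "{0<..t} \<subseteq> {s \<in> {0..1}. l < \<bar>recip_on01 f s\<bar>}"
  proof
    fix s assume s: "s \<in> {0<..t}"
    then have "0 < f s" using classG_pos[OF G, of s] t by simp
    moreover have "1 / f t \<le> 1 / f s"
      using classG_mono[OF G, of s t] \<open>0 < f s\<close> s t by (auto intro: frac_le)
    ultimately show "s \<in> {s \<in> {0..1}. l < \<bar>recip_on01 f s\<bar>}"
      using s t l by (auto simp: recip_on01_def)
  qed
  then have "measure lebesgue {0<..t} \<le> distrib_fun (recip_on01 f) l"
    unfolding distrib_fun_def
    by (rule measure_mono_fmeasurable[OF _ _ meas01_level_set[OF meas01_recip_on01[OF G]]]) auto
  with l t show False by simp
qed

lemma nn_integral_powr_Icc:
  fixes c \<gamma> t :: real
  assumes c: "0 \<le> c" and \<gamma>: "\<gamma> < 1" and t: "0 \<le> t"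
  shows "(\<integral>\<^sup>+ s. ennreal (c * s powr (-\<gamma>)) * indicator {0..t} s \<partial>lborel)
    = ennreal (c * (t powr (1 - \<gamma>) / (1 - \<gamma>)))"
proof -
  have "((\<lambda>s. c * s powr (-\<gamma>)) has_integral (c * (t powr (-\<gamma> + 1) / (-\<gamma> + 1)))) {0..t}"
    using \<gamma> t by (intro has_integral_mult_right has_integral_powr_from_0) auto
  then have "(\<integral>\<^sup>+ s. ennreal (c * s powr (-\<gamma>)) * indicator {0..t} s \<partial>lborel)
      = ennreal (c * (t powr (-\<gamma> + 1) / (-\<gamma> + 1)))"
    by (rule nn_integral_has_integral_lebesgue'[rotated]) (use c in auto)
  then show ?thesis by simp
qed

lemma rearr_recip_on01_le_powr:
  assumes G: "classG \<phi>"
    and bound: "\<And>a b. 0 < a \<Longrightarrow> a \<le> b \<Longrightarrow> b \<le> 1 \<Longrightarrow> \<phi> b \<le> K * (b/a) powr \<gamma> * \<phi> a"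
    and st: "0 < s" "s \<le> t" "t \<le> 1"
  shows "rearr (recip_on01 \<phi>) s \<le> K * (2*t) powr \<gamma> / \<phi> t * s powr (-\<gamma>)"
proof -
  have "\<phi> t \<le> K * (t/(s/2)) powr \<gamma> * \<phi> (s/2)"
    using bound[of "s/2" t] st by auto
  also have "(t/(s/2)) powr \<gamma> = (2*t) powr \<gamma> * s powr (-\<gamma>)"
    using st by (simp add: powr_divide powr_minus_divide field_simps)
  finally have "1 / \<phi> (s/2) \<le> K * (2*t) powr \<gamma> / \<phi> t * s powr (-\<gamma>)"
    using classG_pos[OF G, of "s/2"] classG_pos[OF G, of t] st by (simp add: field_simps)
  with rearr_recip_on01_le[OF G, of s] st show ?thesis by simp
qed

lemma recip_on01_in_marcinkiewicz:
  assumes G: "classG \<phi>" and K: "0 \<le> K" and \<gamma>: "\<gamma> < 1"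
    and bound: "\<And>a b. 0 < a \<Longrightarrow> a \<le> b \<Longrightarrow> b \<le> 1 \<Longrightarrow> \<phi> b \<le> K * (b/a) powr \<gamma> * \<phi> a"
  shows "recip_on01 \<phi> \<in> marcinkiewicz_space (tilde \<phi>)"
proof -
  define C where "C = K * 2 powr \<gamma> / (1 - \<gamma>)"
  have "(\<integral>\<^sup>+ s. ennreal (rearr (recip_on01 \<phi>) s) * indicator {0<..t} s \<partial>lborel)
      \<le> ennreal (C * tilde \<phi> t)" if t: "0 < t" "t \<le> 1" for t
  proof -
    define c where "c = K * (2*t) powr \<gamma> / \<phi> t"
    have \<phi>t: "0 < \<phi> t" using classG_pos[OF G] t by auto
    have "(\<integral>\<^sup>+ s. ennreal (rearr (recip_on01 \<phi>) s) * indicator {0<..t} s \<partial>lborel)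
        \<le> (\<integral>\<^sup>+ s. ennreal (c * s powr (-\<gamma>)) * indicator {0..t} s \<partial>lborel)"
      using rearr_recip_on01_le_powr[OF G bound _ _ t(2)] unfolding c_def
      by (intro nn_integral_mono) (auto simp: indicator_def intro: ennreal_leI)
    also have "\<dots> = ennreal (c * (t powr (1 - \<gamma>) / (1 - \<gamma>)))"
      using K \<phi>t \<gamma> t by (intro nn_integral_powr_Icc) (auto simp: c_def)
    also have "c * (t powr (1 - \<gamma>) / (1 - \<gamma>)) = C * tilde \<phi> t"
    proof -
      have "(2*t) powr \<gamma> * t powr (1 - \<gamma>) = 2 powr \<gamma> * t"
        using t by (simp add: powr_mult powr_add[symmetric])
      then show ?thesis unfolding c_def C_def tilde_def using \<phi>t \<gamma> by (simp add: field_simps)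
    qed
    finally show ?thesis .
  qed
  with meas01_recip_on01[OF G] show ?thesis
    unfolding marcinkiewicz_space_def by (intro CollectI conjI exI[of _ C]) auto
qed

lemma nn_integral_recip_on01_le_lorentz_norm:
  assumes G: "classG f"
  shows "(\<integral>\<^sup>+ s. ennreal (recip_on01 f s) \<partial>interval_measure (ext_fun \<psi>))
    \<le> lorentz_norm \<psi> (recip_on01 f)"
  unfolding lorentz_norm_def
proof (rule nn_integral_mono)
  fix s
  show "ennreal (recip_on01 f s) \<le> ennreal (rearr (recip_on01 f) s) * indicator {0<..1} s"
    using rearr_recip_on01_ge[OF G, of s] by (auto simp: recip_on01_def intro: ennreal_leI)
qed

lemma marcinkiewicz_rearr_le:
  assumes x: "x \<in> marcinkiewicz_space (tilde \<rho>)" and \<rho>: "\<And>t. 0 < t \<Longrightarrow> t \<le> 1 \<Longrightarrow> 0 < \<rho> t"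
  obtains C where "0 \<le> C" "\<And>t. 0 < t \<Longrightarrow> t \<le> 1 \<Longrightarrow> rearr x t \<le> C / \<rho> t"
proof -
  have x: "meas01 x" and "\<exists>C. \<forall>t\<in>{0<..1}.
      (\<integral>\<^sup>+ s. ennreal (rearr x s) * indicator {0<..t} s \<partial>lborel) \<le> ennreal (C * tilde \<rho> t)"
    using x unfolding marcinkiewicz_space_def by auto
  then obtain C where C: "\<And>t. t \<in> {0<..1} \<Longrightarrow>
      (\<integral>\<^sup>+ s. ennreal (rearr x s) * indicator {0<..t} s \<partial>lborel) \<le> ennreal (C * tilde \<rho> t)"
    by blast
  have "rearr x t \<le> max C 0 / \<rho> t" if t: "0 < t" "t \<le> 1" for t
  proof -
    have "ennreal (rearr x t * t) = ennreal (rearr x t) * ennreal t"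
      by (rule ennreal_mult'[OF rearr_nonneg[OF x t(1)]])
    also have "\<dots> = (\<integral>\<^sup>+ s. ennreal (rearr x t) * indicator {0<..t} s \<partial>lborel)"
      using t by (simp add: nn_integral_cmult_indicator)
    also have "\<dots> \<le> (\<integral>\<^sup>+ s. ennreal (rearr x s) * indicator {0<..t} s \<partial>lborel)"
      using rearr_antimono[OF x]
      by (intro nn_integral_mono) (auto simp: indicator_def intro: ennreal_leI)
    also have "\<dots> \<le> ennreal (C * tilde \<rho> t)" using C t by simp
    also have "\<dots> \<le> ennreal (max C 0 * (t / \<rho> t))"
      unfolding tilde_def using t \<rho>[OF t] by (intro ennreal_leI mult_right_mono) auto
    finally have "rearr x t * t \<le> max C 0 * (t / \<rho> t)"
      using t \<rho>[OF t] by (subst (asm) ennreal_le_iff) auto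
    then show ?thesis using t \<rho>[OF t] by (simp add: field_simps)
  qed
  then show ?thesis using that[of "max C 0"] by simp
qed

lemma marcinkiewicz_subset_lorentz:
  assumes G: "classG \<rho>"
    and fin: "(\<integral>\<^sup>+ s. ennreal (recip_on01 \<rho> s) \<partial>interval_measure (ext_fun \<psi>)) < \<infinity>"
  shows "marcinkiewicz_space (tilde \<rho>) \<subseteq> lorentz_space \<psi>"
proof
  fix x assume x: "x \<in> marcinkiewicz_space (tilde \<rho>)"
  then obtain C where C: "0 \<le> C" "\<And>t. 0 < t \<Longrightarrow> t \<le> 1 \<Longrightarrow> rearr x t \<le> C / \<rho> t"
    using marcinkiewicz_rearr_le[OF x classG_pos[OF G]] by blast
  have "lorentz_norm \<psi> x
      \<le> (\<integral>\<^sup>+ s. ennreal C * ennreal (recip_on01 \<rho> s) \<partial>interval_measure (ext_fun \<psi>))"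
    unfolding lorentz_norm_def
  proof (rule nn_integral_mono)
    fix s
    show "ennreal (rearr x s) * indicator {0<..1} s \<le> ennreal C * ennreal (recip_on01 \<rho> s)"
    proof (cases "0 < s \<and> s \<le> 1")
      case True
      then have "rearr x s \<le> C * recip_on01 \<rho> s" using C(2)[of s] by (simp add: recip_on01_def)
      then have "ennreal (rearr x s) \<le> ennreal C * ennreal (recip_on01 \<rho> s)"
        unfolding ennreal_mult'[OF C(1), symmetric] by (rule ennreal_leI)
      with True show ?thesis by simp
    qed simp
  qed
  also have "\<dots> = ennreal C * (\<integral>\<^sup>+ s. ennreal (recip_on01 \<rho> s) \<partial>interval_measure (ext_fun \<psi>))"
  proof (rule nn_integral_cmult)
    have "recip_on01 \<rho> \<in> borel_measurable (interval_measure (ext_fun \<psi>))"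
      unfolding measurable_cong_sets[OF sets_interval_measure refl] by (rule recip_on01_borel[OF G])
    then show "(\<lambda>s. ennreal (recip_on01 \<rho> s)) \<in> borel_measurable (interval_measure (ext_fun \<psi>))"
      by measurable
  qed
  also have "\<dots> < \<infinity>" using fin by (simp add: ennreal_mult_less_top)
  finally have "lorentz_norm \<psi> x < \<infinity>" .
  moreover have "meas01 x" using x by (simp add: marcinkiewicz_space_def)
  ultimately show "x \<in> lorentz_space \<psi>" by (simp add: lorentz_space_def)
qed

section \<open>Construction of the smaller function\<close>

lemma nn_integral_Ioc_less:
  fixes h :: "real \<Rightarrow> ennreal"
  assumes M: "sets M = sets borel" and h: "h \<in> borel_measurable borel"
    and fin: "(\<integral>\<^sup>+ s. h s \<partial>M) < \<infinity>" and e: "0 < e"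
  obtains t where "0 < t" "t \<le> 1" "(\<integral>\<^sup>+ s. h s * indicator {0<..t} s \<partial>M) < e"
proof -
  define f where "f n s = h s * indicator {0<..1 / Suc n} s" for n s
  have meas: "f n \<in> borel_measurable M" for n
    unfolding f_def measurable_cong_sets[OF M refl] using h by measurable
  have dec: "decseq f"
  proof (intro decseq_SucI le_funI)
    fix n s
    have "1 / real (Suc (Suc n)) \<le> 1 / real (Suc n)" by (simp add: frac_le)
    then show "f (Suc n) s \<le> f n s"
      unfolding f_def by (intro mult_left_mono) (auto simp: indicator_def)
  qed
  have fin_n: "(\<integral>\<^sup>+ s. f n s \<partial>M) < \<infinity>" for n
  proof -
    have "(\<integral>\<^sup>+ s. f n s \<partial>M) \<le> (\<integral>\<^sup>+ s. h s \<partial>M)"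
      by (intro nn_integral_mono) (simp add: f_def indicator_def)
    with fin show ?thesis by (rule le_less_trans[rotated])
  qed
  have pointwise: "(INF n. f n s) = 0" for s
  proof (cases "0 < s")
    case True
    then obtain n where "1 / Suc n < s" using reals_Archimedean by (auto simp: inverse_eq_divide)
    then have "f n s = 0" by (simp add: f_def)
    moreover have "(INF n. f n s) \<le> f n s" by (rule INF_lower) simp
    ultimately show ?thesis by simp
  qed (simp add: f_def)
  have "(INF n. \<integral>\<^sup>+ s. f n s \<partial>M) = 0"
    using nn_integral_monotone_convergence_INF_decseq[OF dec meas fin_n] by (simp add: pointwise)
  with e have "(INF n. \<integral>\<^sup>+ s. f n s \<partial>M) < e" by simp
  then obtain n where "(\<integral>\<^sup>+ s. f n s \<partial>M) < e" by (auto simp: INF_less_iff)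
  then show ?thesis by (intro that[of "1 / Suc n"]) (auto simp: f_def)
qed

definition lower_envelope :: "(real \<Rightarrow> real) \<Rightarrow> (nat \<Rightarrow> real) \<Rightarrow> real \<Rightarrow> real" where
  "lower_envelope \<phi> \<tau> t = (INF j. (1/2)^j * \<phi> t + \<phi> (\<tau> j) / \<tau> j * t)"

definition dyadic_weight :: "(nat \<Rightarrow> real) \<Rightarrow> real \<Rightarrow> ennreal" where
  "dyadic_weight \<tau> s = 1 + (\<Sum>k. ennreal (2^k) * indicator {0<..\<tau> k} s)"

lemma one_le_dyadic_weight: "1 \<le> dyadic_weight \<tau> s"
  by (simp add: dyadic_weight_def)

lemma dyadic_weight_ge:
  assumes "0 < s" "s \<le> \<tau> j"
  shows "ennreal (2^j) \<le> dyadic_weight \<tau> s"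
proof -
  define F where "F k = ennreal (2^k) * indicator {0<..\<tau> k} s" for k
  have "sum F {j} \<le> suminf F" by (rule sum_le_suminf) auto
  also have "\<dots> \<le> dyadic_weight \<tau> s" by (simp add: dyadic_weight_def F_def[abs_def])
  finally show ?thesis using assms by (simp add: F_def)
qed

lemma nn_integral_dyadic_weight_finite:
  fixes h :: "real \<Rightarrow> ennreal"
  assumes M: "sets M = sets borel" and h: "h \<in> borel_measurable borel"
    and fin: "(\<integral>\<^sup>+ s. h s \<partial>M) < \<infinity>"
    and small: "\<And>k. (\<integral>\<^sup>+ s. h s * indicator {0<..\<tau> k} s \<partial>M) \<le> ennreal ((1/4)^k)"
  shows "(\<integral>\<^sup>+ s. dyadic_weight \<tau> s * h s \<partial>M) < \<infinity>"
proof -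
  have hk: "(\<lambda>s. h s * indicator {0<..\<tau> k} s) \<in> borel_measurable M" for k
    unfolding measurable_cong_sets[OF M refl] using h by measurable
  then have meas: "(\<lambda>s. ennreal (2^k) * (h s * indicator {0<..\<tau> k} s)) \<in> borel_measurable M" for k
    by measurable
  have hM: "h \<in> borel_measurable M" using h by (simp add: measurable_cong_sets[OF M refl])
  have "dyadic_weight \<tau> s * h s = h s + (\<Sum>k. ennreal (2^k) * (h s * indicator {0<..\<tau> k} s))" for s
    by (simp add: dyadic_weight_def distrib_left mult_ac)
  then have split: "(\<integral>\<^sup>+ s. dyadic_weight \<tau> s * h s \<partial>M)
      = (\<integral>\<^sup>+ s. h s \<partial>M) + (\<integral>\<^sup>+ s. (\<Sum>k. ennreal (2^k) * (h s * indicator {0<..\<tau> k} s)) \<partial>M)"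
    using meas by (simp add: nn_integral_add[OF hM])
  have "(\<integral>\<^sup>+ s. (\<Sum>k. ennreal (2^k) * (h s * indicator {0<..\<tau> k} s)) \<partial>M)
      = (\<Sum>k. \<integral>\<^sup>+ s. ennreal (2^k) * (h s * indicator {0<..\<tau> k} s) \<partial>M)"
    by (rule nn_integral_suminf[OF meas])
  also have "\<dots> = (\<Sum>k. ennreal (2^k) * (\<integral>\<^sup>+ s. h s * indicator {0<..\<tau> k} s \<partial>M))"
    by (simp only: nn_integral_cmult[OF hk])
  also have "\<dots> \<le> (\<Sum>k. ennreal ((1/2)^k))"
  proof (rule suminf_le)
    fix k
    have "ennreal (2^k) * (\<integral>\<^sup>+ s. h s * indicator {0<..\<tau> k} s \<partial>M)
        \<le> ennreal (2^k) * ennreal ((1/4)^k)"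
      using small by (rule mult_left_mono) simp
    also have "\<dots> = ennreal (2^k * (1/4)^k)"
      by (rule ennreal_mult[symmetric]) auto
    also have "(2::real)^k * (1/4)^k = (1/2)^k"
      by (simp flip: power_mult_distrib)
    finally show "ennreal (2^k) * (\<integral>\<^sup>+ s. h s * indicator {0<..\<tau> k} s \<partial>M) \<le> ennreal ((1/2)^k)" .
  qed auto
  also have "(\<Sum>k. ennreal ((1/2::real)^k)) = ennreal 2"
  proof -
    have "(\<Sum>k. ennreal ((1/2::real)^k)) = ennreal (\<Sum>k. (1/2::real)^k)"
      by (rule suminf_ennreal2) auto
    then show ?thesis using suminf_geometric[of "1/2::real"] by simp
  qed
  finally have "(\<integral>\<^sup>+ s. (\<Sum>k. ennreal (2^k) * (h s * indicator {0<..\<tau> k} s)) \<partial>M) < \<infinity>"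
    by (simp add: le_less_trans)
  with fin show ?thesis unfolding split by simp
qed

context
  fixes \<phi> :: "real \<Rightarrow> real" and \<tau> :: "nat \<Rightarrow> real"
  assumes G: "classG \<phi>" and \<tau>: "\<And>j. 0 < \<tau> j" "\<And>j. \<tau> j \<le> 1"
begin

lemma classG_lower_envelope: "classG (lower_envelope \<phi> \<tau>)"
  unfolding lower_envelope_def[abs_def]
proof (rule classG_cINF)
  have \<phi>1: "0 < \<phi> 1" using classG_pos[OF G] by simp
  then show "classG (\<lambda>t. \<phi> 1 * t)" by (rule classG_linear)
  fix j
  have slope: "\<phi> 1 \<le> \<phi> (\<tau> j) / \<tau> j"
    using classG_ratio_antimono[OF G \<tau>(1) \<tau>(2) order_refl] \<tau>(1)[of j] by (simp add: field_simps)
  with \<phi>1 have "0 < \<phi> (\<tau> j) / \<tau> j" by linarith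
  then show "classG (\<lambda>t. (1/2)^j * \<phi> t + \<phi> (\<tau> j) / \<tau> j * t)"
    by (intro classG_add classG_cmult classG_linear G) auto
  fix t :: real assume t: "0 < t" "t \<le> 1"
  have "0 \<le> (1/2)^j * \<phi> t" using classG_pos[OF G t] by simp
  moreover have "\<phi> 1 * t \<le> \<phi> (\<tau> j) / \<tau> j * t" using slope t by (intro mult_right_mono) auto
  ultimately show "\<phi> 1 * t \<le> (1/2)^j * \<phi> t + \<phi> (\<tau> j) / \<tau> j * t" by linarith
qed

lemma lower_envelope_le:
  assumes t: "0 < t" "t \<le> 1"
  shows "lower_envelope \<phi> \<tau> t \<le> (1/2)^j * \<phi> t + \<phi> (\<tau> j) / \<tau> j * t"
  unfolding lower_envelope_def
proof (rule cINF_lower)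
  have "0 \<le> (1/2)^j * \<phi> t + \<phi> (\<tau> j) / \<tau> j * t" for j
    using classG_pos[OF G t] classG_pos[OF G \<tau>(1) \<tau>(2), of j] \<tau>(1)[of j] t by simp
  then show "bdd_below (range (\<lambda>j. (1/2)^j * \<phi> t + \<phi> (\<tau> j) / \<tau> j * t))"
    by (intro bdd_belowI[where m = 0]) auto
qed simp

text \<open>The \<open>j\<close>-th term of the infimum is \<open>2^-j \<phi> t\<close> plus a multiple of \<open>t\<close>, and \<open>t/\<phi> t \<rightarrow> 0\<close>.\<close>
lemma lower_envelope_div_tendsto_0:
  assumes lim: "((\<lambda>t. t / \<phi> t) \<longlongrightarrow> 0) (at_right 0)"
  shows "((\<lambda>t. lower_envelope \<phi> \<tau> t / \<phi> t) \<longlongrightarrow> 0) (at_right 0)"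
proof (rule order_tendstoI)
  fix a :: real
  assume "a < 0"
  show "eventually (\<lambda>t. a < lower_envelope \<phi> \<tau> t / \<phi> t) (at_right 0)"
    using eventually_at_right_0_unit
  proof eventually_elim
    case (elim t)
    then have "0 < lower_envelope \<phi> \<tau> t" "0 < \<phi> t"
      using classG_pos[OF classG_lower_envelope] classG_pos[OF G] by auto
    then have "0 < lower_envelope \<phi> \<tau> t / \<phi> t" by simp
    with \<open>a < 0\<close> show ?case by linarith
  qed
next
  fix a :: real
  assume "0 < a"
  then obtain j where j: "(1/2::real)^j < a/2" using real_arch_pow_inv[of "a/2" "1/2"] by auto
  define c where "c = \<phi> (\<tau> j) / \<tau> j"
  have "0 < c" using classG_pos[OF G \<tau>(1) \<tau>(2), of j] \<tau>(1)[of j] by (simp add: c_def)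
  with \<open>0 < a\<close> have "eventually (\<lambda>t. t / \<phi> t < a / (2 * c)) (at_right 0)"
    by (intro order_tendstoD(2)[OF lim]) simp
  with eventually_at_right_0_unit
  show "eventually (\<lambda>t. lower_envelope \<phi> \<tau> t / \<phi> t < a) (at_right 0)"
  proof eventually_elim
    case (elim t)
    then have \<phi>t: "0 < \<phi> t" using classG_pos[OF G] by auto
    have "lower_envelope \<phi> \<tau> t / \<phi> t \<le> ((1/2)^j * \<phi> t + c * t) / \<phi> t"
      using lower_envelope_le[of t j] elim \<phi>t by (simp add: divide_right_mono c_def)
    also have "\<dots> = (1/2)^j + c * (t / \<phi> t)" using \<phi>t by (simp add: field_simps)
    also have "c * (t / \<phi> t) < a / 2" using elim \<open>0 < c\<close> by (simp add: field_simps)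
    finally show ?case using j by linarith
  qed
qed

lemma lower_envelope_ge:
  assumes s: "0 < s" "s \<le> 1" and d: "1 \<le> d" "\<And>j. s \<le> \<tau> j \<Longrightarrow> 2^j \<le> d"
  shows "\<phi> s \<le> d * lower_envelope \<phi> \<tau> s"
proof -
  have \<phi>s: "0 < \<phi> s" using classG_pos[OF G s] .
  have each: "\<phi> s / d \<le> (1/2)^j * \<phi> s + \<phi> (\<tau> j) / \<tau> j * s" for j
  proof (cases "s \<le> \<tau> j")
    case True
    have "\<phi> s / d \<le> \<phi> s / 2^j"
      by (rule frac_le) (use d(2)[OF True] \<phi>s in auto)
    also have "\<dots> = (1/2)^j * \<phi> s" by (simp add: power_one_over)
    also have "\<dots> \<le> (1/2)^j * \<phi> s + \<phi> (\<tau> j) / \<tau> j * s"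
      using classG_pos[OF G \<tau>(1) \<tau>(2), of j] \<tau>(1)[of j] s by simp
    finally show ?thesis .
  next
    case False
    then have "\<tau> j * \<phi> s \<le> s * \<phi> (\<tau> j)" using classG_ratio_antimono[OF G \<tau>(1)] s by simp
    then have "\<phi> s \<le> \<phi> (\<tau> j) / \<tau> j * s" using \<tau>(1)[of j] by (simp add: field_simps)
    moreover have "\<phi> s / d \<le> \<phi> s" using \<phi>s d(1) by (simp add: divide_le_eq)
    moreover have "0 \<le> (1/2::real)^j * \<phi> s" using \<phi>s by simp
    ultimately show ?thesis by linarith
  qed
  have "\<phi> s / d \<le> lower_envelope \<phi> \<tau> s"
    unfolding lower_envelope_def by (intro cINF_greatest each) simp
  then show ?thesis using d(1) by (simp add: field_simps)
qed

lemma recip_lower_envelope_le: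
  "ennreal (recip_on01 (lower_envelope \<phi> \<tau>) s) \<le> dyadic_weight \<tau> s * ennreal (recip_on01 \<phi> s)"
proof (cases "0 < s \<and> s \<le> 1")
  case s: True
  then have \<phi>s: "0 < \<phi> s" using classG_pos[OF G] by auto
  show ?thesis
  proof (cases "dyadic_weight \<tau> s")
    case (real d)
    have "1 \<le> d" using one_le_dyadic_weight[of \<tau> s] real by simp
    moreover have "2^j \<le> d" if "s \<le> \<tau> j" for j
      using dyadic_weight_ge[of s \<tau> j] s that real by simp
    ultimately have "\<phi> s \<le> d * lower_envelope \<phi> \<tau> s"
      using lower_envelope_ge s by blast
    moreover have "0 < lower_envelope \<phi> \<tau> s"
      using classG_pos[OF classG_lower_envelope] s by blast
    ultimately have "1 / lower_envelope \<phi> \<tau> s \<le> d * (1 / \<phi> s)"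
      using \<phi>s by (simp add: field_simps)
    then show ?thesis
      using s real by (simp add: recip_on01_def ennreal_mult'[symmetric] ennreal_leI)
  next
    case top
    have "ennreal (recip_on01 \<phi> s) \<noteq> 0" using \<phi>s s by (simp add: recip_on01_def)
    then show ?thesis by (simp add: top ennreal_top_mult)
  qed
qed (auto simp: recip_on01_def)

end

lemma classG_smaller_with_integrable_recip:
  assumes G: "classG \<phi>" and M: "sets M = sets borel"
    and lim: "((\<lambda>t. t / \<phi> t) \<longlongrightarrow> 0) (at_right 0)"
    and fin: "(\<integral>\<^sup>+ s. ennreal (recip_on01 \<phi> s) \<partial>M) < \<infinity>"
  obtains \<rho> where "classG \<rho>" "((\<lambda>t. \<rho> t / \<phi> t) \<longlongrightarrow> 0) (at_right 0)"
    "(\<integral>\<^sup>+ s. ennreal (recip_on01 \<rho> s) \<partial>M) < \<infinity>"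
proof -
  define h where "h s = ennreal (recip_on01 \<phi> s)" for s
  have h: "h \<in> borel_measurable borel"
    unfolding h_def using recip_on01_borel[OF G] by measurable
  have "\<exists>t. 0 < t \<and> t \<le> 1 \<and> (\<integral>\<^sup>+ s. h s * indicator {0<..t} s \<partial>M) < ennreal ((1/4)^k)" for k
    using nn_integral_Ioc_less[OF M h, of "ennreal ((1/4)^k)"] fin by (auto simp: h_def)
  then obtain \<tau> where \<tau>: "\<And>k. 0 < \<tau> k" "\<And>k. \<tau> k \<le> 1"
    and small: "\<And>k. (\<integral>\<^sup>+ s. h s * indicator {0<..\<tau> k} s \<partial>M) \<le> ennreal ((1/4)^k)"
    by (metis less_imp_le)
  show ?thesis
  proof (rule that)
    show "classG (lower_envelope \<phi> \<tau>)" by (rule classG_lower_envelope[OF G \<tau>])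
    show "((\<lambda>t. lower_envelope \<phi> \<tau> t / \<phi> t) \<longlongrightarrow> 0) (at_right 0)"
      by (rule lower_envelope_div_tendsto_0[OF G \<tau> lim])
    have "(\<integral>\<^sup>+ s. ennreal (recip_on01 (lower_envelope \<phi> \<tau>) s) \<partial>M)
        \<le> (\<integral>\<^sup>+ s. dyadic_weight \<tau> s * h s \<partial>M)"
      unfolding h_def by (intro nn_integral_mono recip_lower_envelope_le[OF G \<tau>])
    also have "\<dots> < \<infinity>"
      by (rule nn_integral_dyadic_weight_finite[OF M h _ small]) (use fin in \<open>simp add: h_def\<close>)
    finally show "(\<integral>\<^sup>+ s. ennreal (recip_on01 (lower_envelope \<phi> \<tau>) s) \<partial>M) < \<infinity>" .
  qed
qed

theorem lemma1:
  fixes \<phi> \<psi> :: "real \<Rightarrow> real"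
  assumes "classG \<phi>" and "classG \<psi>"
    and "((\<lambda>t. \<psi> t / \<phi> t) \<longlongrightarrow> 0) (at_right 0)"
    and "upper_dilation_index \<phi> < 1"
    and "marcinkiewicz_space (tilde \<phi>) \<subseteq> lorentz_space \<psi>"
  shows "\<exists>\<rho>. classG \<rho> \<and> ((\<lambda>t. \<rho> t / \<phi> t) \<longlongrightarrow> 0) (at_right 0)
             \<and> marcinkiewicz_space (tilde \<rho>) \<subseteq> lorentz_space \<psi>"
proof -
  obtain K \<gamma> where "0 \<le> K" "\<gamma> < 1"
    "\<And>a b. 0 < a \<Longrightarrow> a \<le> b \<Longrightarrow> b \<le> 1 \<Longrightarrow> \<phi> b \<le> K * (b/a) powr \<gamma> * \<phi> a"
    using classG_power_bound[OF assms(1,4)] by blast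
  then have "recip_on01 \<phi> \<in> lorentz_space \<psi>"
    using recip_on01_in_marcinkiewicz[OF assms(1)] assms(5) by blast
  then have "(\<integral>\<^sup>+ s. ennreal (recip_on01 \<phi> s) \<partial>interval_measure (ext_fun \<psi>)) < \<infinity>"
    using nn_integral_recip_on01_le_lorentz_norm[OF assms(1)] le_less_trans
    unfolding lorentz_space_def by blast
  moreover have "((\<lambda>t. t / \<phi> t) \<longlongrightarrow> 0) (at_right 0)"
    by (rule tendsto_id_div_classG[OF assms(1-3)])
  ultimately obtain \<rho> where "classG \<rho>" "((\<lambda>t. \<rho> t / \<phi> t) \<longlongrightarrow> 0) (at_right 0)"
    "(\<integral>\<^sup>+ s. ennreal (recip_on01 \<rho> s) \<partial>interval_measure (ext_fun \<psi>)) < \<infinity>"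
    using classG_smaller_with_integrable_recip[OF assms(1) sets_interval_measure] by blast
  then show ?thesis using marcinkiewicz_subset_lorentz by blast
qed

end
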